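(* Let $V$ be a quasi-regular mixed lattice vector space and $A$ a linear subspace of $V$. Then $A$ is an ideal if and only if: whenever $x\in V$, $y\in A$ and $s(x)\le s(y)$, we have $x\in A$.
   Context: A mixed lattice vector space is a real vector space $V$ with two partial orderings $\le$ (initial) and $\preceq$ (specific), each compatible with the vector space structure, such that for all $x,y$ the mixed lower envelope $x\curlywedge y=\max\{w: w\preceq x,\ w\le y\}$ and mixed upper envelope $x\curlyvee y=\min\{w: x\preceq w,\ y\le w\}$ exist (max/min with respect to $\le$). $V$ is quasi-regular if $V_{sp}=\{x:0\preceq x\}$ is closed under $\curlywedge,\curlyvee$. An ideal is a linear subspace closed under $\curlywedge,\curlyvee$ which is $(\le)$-order convex ($x\le z\le y$ with $x,y$ in it implies $z$ in it). The symmetric generalized absolute value of $x$ is $s(x)=\tfrac12\big((x\curlyvee 0)+(0\curlyvee(-x))+((-x)\curlyvee 0)+(0\curlyvee x)\big)$. *)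

theory Defs
  imports "HOL-Analysis.Analysis"
begin

definition ordered_vs :: "('a::real_vector \<Rightarrow> 'a \<Rightarrow> bool) \<Rightarrow> bool" where
  "ordered_vs R \<longleftrightarrow>
     (\<forall>x. R x x) \<and> (\<forall>x y. R x y \<and> R y x \<longrightarrow> x = y) \<and>
     (\<forall>x y z. R x y \<and> R y z \<longrightarrow> R x z) \<and>
     (\<forall>x y z. R x y \<longrightarrow> R (x + z) (y + z)) \<and>
     (\<forall>x y (c::real). R x y \<and> 0 \<le> c \<longrightarrow> R (c *\<^sub>R x) (c *\<^sub>R y))"

definition is_mlow :: "('a \<Rightarrow> 'a \<Rightarrow> bool) \<Rightarrow> ('a \<Rightarrow> 'a \<Rightarrow> bool) \<Rightarrow> 'a \<Rightarrow> 'a \<Rightarrow> 'a \<Rightarrow> bool" where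
  "is_mlow le sle x y m \<longleftrightarrow> sle m x \<and> le m y \<and> (\<forall>w. sle w x \<and> le w y \<longrightarrow> le w m)"

definition is_mup :: "('a \<Rightarrow> 'a \<Rightarrow> bool) \<Rightarrow> ('a \<Rightarrow> 'a \<Rightarrow> bool) \<Rightarrow> 'a \<Rightarrow> 'a \<Rightarrow> 'a \<Rightarrow> bool" where
  "is_mup le sle x y m \<longleftrightarrow> sle x m \<and> le y m \<and> (\<forall>w. sle x w \<and> le y w \<longrightarrow> le m w)"

definition mlow :: "('a \<Rightarrow> 'a \<Rightarrow> bool) \<Rightarrow> ('a \<Rightarrow> 'a \<Rightarrow> bool) \<Rightarrow> 'a \<Rightarrow> 'a \<Rightarrow> 'a" where
  "mlow le sle x y = (THE m. is_mlow le sle x y m)"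

definition mup :: "('a \<Rightarrow> 'a \<Rightarrow> bool) \<Rightarrow> ('a \<Rightarrow> 'a \<Rightarrow> bool) \<Rightarrow> 'a \<Rightarrow> 'a \<Rightarrow> 'a" where
  "mup le sle x y = (THE m. is_mup le sle x y m)"

definition mixed_lattice_vs :: "('a::real_vector \<Rightarrow> 'a \<Rightarrow> bool) \<Rightarrow> ('a \<Rightarrow> 'a \<Rightarrow> bool) \<Rightarrow> bool" where
  "mixed_lattice_vs le sle \<longleftrightarrow> ordered_vs le \<and> ordered_vs sle \<and>
     (\<forall>x y. \<exists>m. is_mlow le sle x y m) \<and> (\<forall>x y. \<exists>m. is_mup le sle x y m)"

definition quasi_regular :: "('a::real_vector \<Rightarrow> 'a \<Rightarrow> bool) \<Rightarrow> ('a \<Rightarrow> 'a \<Rightarrow> bool) \<Rightarrow> bool" where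
  "quasi_regular le sle \<longleftrightarrow>
     (\<forall>x y. sle 0 x \<and> sle 0 y \<longrightarrow> sle 0 (mlow le sle x y) \<and> sle 0 (mup le sle x y))"

definition ml_ideal :: "('a::real_vector \<Rightarrow> 'a \<Rightarrow> bool) \<Rightarrow> ('a \<Rightarrow> 'a \<Rightarrow> bool) \<Rightarrow> 'a set \<Rightarrow> bool" where
  "ml_ideal le sle A \<longleftrightarrow> subspace A \<and>
     (\<forall>x\<in>A. \<forall>y\<in>A. mlow le sle x y \<in> A \<and> mup le sle x y \<in> A) \<and>
     (\<forall>x\<in>A. \<forall>y\<in>A. \<forall>z. le x z \<and> le z y \<longrightarrow> z \<in> A)"

definition sabs :: "('a::real_vector \<Rightarrow> 'a \<Rightarrow> bool) \<Rightarrow> ('a \<Rightarrow> 'a \<Rightarrow> bool) \<Rightarrow> 'a \<Rightarrow> 'a" where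
  "sabs le sle x = (1/2) *\<^sub>R (mup le sle x 0 + mup le sle 0 (- x) + mup le sle (- x) 0 + mup le sle 0 x)"

end

theory Submission
  imports Defs
begin

text \<open>
  The mixed envelopes commute with translations, which gives the closed forms
  \<open>s x = x \<curlyvee> 0 + 0 \<curlyvee> x - x\<close> and \<open>x \<curlywedge> y = x - 0 \<curlyvee> (x - y)\<close>.
  Quasi-regularity makes \<open>\<preceq>\<close> imply \<open>\<le>\<close> (for \<open>0 \<preceq> p\<close> the envelope \<open>0 \<curlywedge> p\<close> is
  \<open>\<preceq>\<close>-squeezed to \<open>0\<close>), and then \<open>-s x \<le> x \<le> s x\<close>, \<open>s a = a\<close> for \<open>0 \<preceq> a\<close>,
  \<open>s\<close> is monotone on the \<open>\<le>\<close>-positive cone, and \<open>0 \<le> d \<curlyvee> 0, 0 \<curlyvee> d \<le> s d\<close>.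
  Hence an ideal, which contains \<open>s y\<close> with \<open>y\<close>, is solid for \<open>s\<close> by order convexity.
  Conversely, a subspace that is solid for \<open>s\<close> contains \<open>s y = s (s y)\<close> with \<open>y\<close>, is order
  convex by monotonicity of \<open>s\<close> applied to \<open>0 \<le> z - x \<le> y - x\<close>, and is closed under
  \<open>x \<curlyvee> y = (x - y) \<curlyvee> 0 + y\<close> and \<open>x \<curlywedge> y = x - 0 \<curlyvee> (x - y)\<close> because it contains
  \<open>d \<curlyvee> 0\<close> and \<open>0 \<curlyvee> d\<close>, which lie between \<open>0\<close> and \<open>s d\<close>.
\<close>

lemma ordered_vs_refl: "ordered_vs R \<Longrightarrow> R x x"
  unfolding ordered_vs_def by blast

lemma ordered_vs_antisym: "ordered_vs R \<Longrightarrow> R x y \<Longrightarrow> R y x \<Longrightarrow> x = y"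
  unfolding ordered_vs_def by blast

lemma ordered_vs_trans: "ordered_vs R \<Longrightarrow> R x y \<Longrightarrow> R y z \<Longrightarrow> R x z"
  unfolding ordered_vs_def by blast

lemma ordered_vs_add_right: "ordered_vs R \<Longrightarrow> R x y \<Longrightarrow> R (x + z) (y + z)"
  unfolding ordered_vs_def by blast

lemma ordered_vs_shift:
  assumes "ordered_vs R" and "R a b" and "b - a = d - c"
  shows "R c d"
  using ordered_vs_add_right[OF assms(1,2), of "c - a"] assms(3)
  by (simp add: algebra_simps)

lemma ordered_vs_add:
  assumes R: "ordered_vs R" and "R a b" and "R c d"
  shows "R (a + c) (b + d)"
proof -
  have "R (a + c) (b + c)" using ordered_vs_add_right[OF R \<open>R a b\<close>] .
  moreover have "R (b + c) (b + d)" using ordered_vs_shift[OF R \<open>R c d\<close>] by simp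
  ultimately show ?thesis using ordered_vs_trans[OF R] by blast
qed

locale mixed_lattice_space =
  fixes le sle :: "'a::real_vector \<Rightarrow> 'a \<Rightarrow> bool"
  assumes mixed_lattice: "mixed_lattice_vs le sle"
begin

abbreviation mixed_sup (infix \<open>\<curlyvee>\<close> 70) where "x \<curlyvee> y \<equiv> mup le sle x y"
abbreviation mixed_inf (infix \<open>\<curlywedge>\<close> 70) where "x \<curlywedge> y \<equiv> mlow le sle x y"
abbreviation s where "s \<equiv> sabs le sle"

lemma le_ordered: "ordered_vs le"
  using mixed_lattice unfolding mixed_lattice_vs_def by blast

lemmas le_order_trans [trans] = ordered_vs_trans[OF le_ordered]

lemma sle_ordered: "ordered_vs sle"
  using mixed_lattice unfolding mixed_lattice_vs_def by blast

lemma mup_eqI: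
  assumes "is_mup le sle x y m"
  shows "x \<curlyvee> y = m"
  unfolding mup_def
proof (rule the_equality[where P = "is_mup le sle x y", OF assms])
  show "m' = m" if "is_mup le sle x y m'" for m'
    using that assms ordered_vs_antisym[OF le_ordered] unfolding is_mup_def by blast
qed

lemma mlow_eqI:
  assumes "is_mlow le sle x y m"
  shows "x \<curlywedge> y = m"
  unfolding mlow_def
proof (rule the_equality[where P = "is_mlow le sle x y", OF assms])
  show "m' = m" if "is_mlow le sle x y m'" for m'
    using that assms ordered_vs_antisym[OF le_ordered] unfolding is_mlow_def by blast
qed

lemma is_mup_mup: "is_mup le sle x y (x \<curlyvee> y)"
  using mixed_lattice mup_eqI unfolding mixed_lattice_vs_def by metis

lemma is_mlow_mlow: "is_mlow le sle x y (x \<curlywedge> y)"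
  using mixed_lattice mlow_eqI unfolding mixed_lattice_vs_def by metis

lemma sle_mup: "sle x (x \<curlyvee> y)"
  using is_mup_mup unfolding is_mup_def by blast

lemma le_mup: "le y (x \<curlyvee> y)"
  using is_mup_mup unfolding is_mup_def by blast

lemma mup_least: "sle x w \<Longrightarrow> le y w \<Longrightarrow> le (x \<curlyvee> y) w"
  using is_mup_mup unfolding is_mup_def by blast

lemma mlow_sle: "sle (x \<curlywedge> y) x"
  using is_mlow_mlow unfolding is_mlow_def by blast

lemma mlow_le: "le (x \<curlywedge> y) y"
  using is_mlow_mlow unfolding is_mlow_def by blast

lemma mup_add: "(x + z) \<curlyvee> (y + z) = x \<curlyvee> y + z"
proof (rule mup_eqI)
  show "is_mup le sle (x + z) (y + z) (x \<curlyvee> y + z)"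
    unfolding is_mup_def
  proof (intro conjI allI impI)
    show "sle (x + z) (x \<curlyvee> y + z)" by (rule ordered_vs_add_right[OF sle_ordered sle_mup])
    show "le (y + z) (x \<curlyvee> y + z)" by (rule ordered_vs_add_right[OF le_ordered le_mup])
    fix w assume "sle (x + z) w \<and> le (y + z) w"
    then have "sle x (w - z)" and "le y (w - z)"
      using ordered_vs_shift[OF sle_ordered] ordered_vs_shift[OF le_ordered] by force+
    then have "le (x \<curlyvee> y) (w - z)" by (rule mup_least)
    then show "le (x \<curlyvee> y + z) w" using ordered_vs_shift[OF le_ordered] by force
  qed
qed

lemma mlow_eq_diff_mup: "x \<curlywedge> y = x - 0 \<curlyvee> (x - y)"
proof (rule mlow_eqI)
  show "is_mlow le sle x y (x - 0 \<curlyvee> (x - y))"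
    unfolding is_mlow_def
  proof (intro conjI allI impI)
    show "sle (x - 0 \<curlyvee> (x - y)) x"
      using ordered_vs_shift[OF sle_ordered sle_mup[of 0 "x - y"]] by force
    show "le (x - 0 \<curlyvee> (x - y)) y"
      using ordered_vs_shift[OF le_ordered le_mup[of "x - y" 0]] by force
    fix w assume "sle w x \<and> le w y"
    then have "sle 0 (x - w)" and "le (x - y) (x - w)"
      using ordered_vs_shift[OF sle_ordered] ordered_vs_shift[OF le_ordered] by force+
    then have "le (0 \<curlyvee> (x - y)) (x - w)" by (rule mup_least)
    then show "le w (x - 0 \<curlyvee> (x - y))" using ordered_vs_shift[OF le_ordered] by force
  qed
qed

lemma sabs_eq: "s x = x \<curlyvee> 0 + 0 \<curlyvee> x - x"
proof -
  have neg_right: "0 \<curlyvee> (- x) = x \<curlyvee> 0 - x" using mup_add[of x "- x" 0] by simp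
  have neg_left: "(- x) \<curlyvee> 0 = 0 \<curlyvee> x - x" using mup_add[of 0 "- x" x] by simp
  have "x \<curlyvee> 0 + (x \<curlyvee> 0 - x) + (0 \<curlyvee> x - x) + 0 \<curlyvee> x
      = 2 *\<^sub>R (x \<curlyvee> 0 + 0 \<curlyvee> x - x)"
    by (simp add: algebra_simps scaleR_2)
  then show ?thesis unfolding sabs_def neg_right neg_left by simp
qed

lemma sle_zero_sabs: "sle 0 (s x)"
proof -
  have "sle (x + 0) (x \<curlyvee> 0 + 0 \<curlyvee> x)"
    by (rule ordered_vs_add[OF sle_ordered sle_mup sle_mup])
  then show ?thesis by (rule ordered_vs_shift[OF sle_ordered]) (simp add: sabs_eq)
qed

lemma mup_zero_le_sabs: "le (x \<curlyvee> 0) (s x)"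
  by (rule ordered_vs_shift[OF le_ordered le_mup[of x 0]]) (simp add: sabs_eq)

lemma sabs_mem_ideal:
  assumes "ml_ideal le sle A" and "y \<in> A"
  shows "s y \<in> A"
proof -
  have A: "subspace A" and mup_mem: "\<And>x y. x \<in> A \<Longrightarrow> y \<in> A \<Longrightarrow> x \<curlyvee> y \<in> A"
    using assms(1) unfolding ml_ideal_def by blast+
  have "0 \<in> A" using A by (rule subspace_0)
  then show ?thesis
    unfolding sabs_eq using mup_mem \<open>y \<in> A\<close> A by (intro subspace_diff subspace_add) auto
qed

end

locale quasi_regular_mixed_lattice_space = mixed_lattice_space +
  assumes quasi_regular: "quasi_regular le sle"
begin

lemma le_if_sle_zero:
  assumes "sle 0 p"
  shows "le 0 p"
proof -
  have "sle 0 (0 \<curlywedge> p)"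
    using quasi_regular assms ordered_vs_refl[OF sle_ordered] unfolding quasi_regular_def by blast
  with mlow_sle have "0 \<curlywedge> p = 0" by (rule ordered_vs_antisym[OF sle_ordered])
  then show ?thesis using mlow_le[of 0 p] by simp
qed

lemma le_if_sle:
  assumes "sle a b"
  shows "le a b"
proof -
  have "sle 0 (b - a)" by (rule ordered_vs_shift[OF sle_ordered assms]) simp
  then have "le 0 (b - a)" by (rule le_if_sle_zero)
  then show ?thesis by (rule ordered_vs_shift[OF le_ordered]) simp
qed

lemma le_sabs: "le x (s x)"
proof -
  have "le (x + x) (x \<curlyvee> 0 + 0 \<curlyvee> x)"
    by (rule ordered_vs_add[OF le_ordered le_if_sle[OF sle_mup] le_mup])
  then show ?thesis by (rule ordered_vs_shift[OF le_ordered]) (simp add: sabs_eq)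
qed

lemma neg_le_sabs: "le (- x) (s x)"
proof -
  have "le (0 + 0) (x \<curlyvee> 0 + 0 \<curlyvee> x)"
    by (rule ordered_vs_add[OF le_ordered le_mup le_if_sle[OF sle_mup]])
  then show ?thesis by (rule ordered_vs_shift[OF le_ordered]) (simp add: sabs_eq)
qed

lemma zero_mup_le_sabs: "le (0 \<curlyvee> x) (s x)"
  by (rule ordered_vs_shift[OF le_ordered le_if_sle[OF sle_mup[of x 0]]]) (simp add: sabs_eq)

lemma sabs_eq_self:
  assumes "sle 0 a"
  shows "s a = a"
proof -
  have "le (a \<curlyvee> 0) a"
    by (rule mup_least[OF ordered_vs_refl[OF sle_ordered] le_if_sle_zero[OF assms]])
  then have right: "a \<curlyvee> 0 = a"
    using ordered_vs_antisym[OF le_ordered _ le_if_sle[OF sle_mup]] by blast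
  have "le (0 \<curlyvee> a) a" by (rule mup_least[OF assms ordered_vs_refl[OF le_ordered]])
  then have left: "0 \<curlyvee> a = a"
    using ordered_vs_antisym[OF le_ordered _ le_mup] by blast
  show ?thesis unfolding sabs_eq right left by simp
qed

lemma sabs_mono:
  assumes "le 0 z" and "le z y"
  shows "le (s z) (s y)"
proof -
  have "le (z \<curlyvee> 0) z" by (rule mup_least[OF ordered_vs_refl[OF sle_ordered] assms(1)])
  then have "le (s z) (0 \<curlyvee> z)" by (rule ordered_vs_shift[OF le_ordered]) (simp add: sabs_eq)
  also have "le (0 \<curlyvee> z) (0 \<curlyvee> y)"
    by (rule mup_least[OF sle_mup le_order_trans[OF assms(2) le_mup]])
  also have "le (0 \<curlyvee> y) (s y)" by (rule zero_mup_le_sabs)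
  finally show ?thesis .
qed

lemma ideal_sabs_solid:
  assumes "ml_ideal le sle A" and "y \<in> A" and "le (s x) (s y)"
  shows "x \<in> A"
proof -
  have A: "subspace A"
    and convex: "\<And>u v w. u \<in> A \<Longrightarrow> v \<in> A \<Longrightarrow> le u w \<Longrightarrow> le w v \<Longrightarrow> w \<in> A"
    using assms(1) unfolding ml_ideal_def by blast+
  have sy: "s y \<in> A" by (rule sabs_mem_ideal[OF assms(1,2)])
  moreover from A sy have "- s y \<in> A" by (rule subspace_neg)
  moreover have "le (- s y) x"
    by (rule ordered_vs_shift[OF le_ordered le_order_trans[OF neg_le_sabs assms(3)]])
      simp
  moreover have "le x (s y)" using le_order_trans[OF le_sabs assms(3)] .
  ultimately show ?thesis using convex by blast
qed

context
  fixes A :: "'a set"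
  assumes A: "subspace A"
    and solid: "\<And>x y. y \<in> A \<Longrightarrow> le (s x) (s y) \<Longrightarrow> x \<in> A"
begin

lemma sabs_mem_solid:
  assumes "y \<in> A"
  shows "s y \<in> A"
proof (rule solid[OF assms])
  show "le (s (s y)) (s y)"
    unfolding sabs_eq_self[OF sle_zero_sabs] by (rule ordered_vs_refl[OF le_ordered])
qed

lemma order_convex_solid:
  assumes "x \<in> A" and "y \<in> A" and "le x z" and "le z y"
  shows "z \<in> A"
proof -
  have "le 0 (z - x)" and "le (z - x) (y - x)"
    using ordered_vs_shift[OF le_ordered assms(3)] ordered_vs_shift[OF le_ordered assms(4)]
    by simp_all
  then have "le (s (z - x)) (s (y - x))" by (rule sabs_mono)
  with subspace_diff[OF A assms(2,1)] have "z - x \<in> A" by (rule solid)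
  from subspace_add[OF A this assms(1)] show ?thesis by simp
qed

lemma mup_zero_mem_solid:
  assumes "d \<in> A"
  shows "d \<curlyvee> 0 \<in> A" and "0 \<curlyvee> d \<in> A"
  by (rule order_convex_solid[OF subspace_0[OF A] sabs_mem_solid[OF assms]],
      (rule le_mup le_if_sle[OF sle_mup] mup_zero_le_sabs zero_mup_le_sabs)+)+

lemma ml_ideal_if_sabs_solid: "ml_ideal le sle A"
  unfolding ml_ideal_def
proof (intro conjI ballI allI impI)
  fix x y assume "x \<in> A" and "y \<in> A"
  with A have d: "x - y \<in> A" by (intro subspace_diff)
  from A mup_zero_mem_solid(1)[OF d] \<open>y \<in> A\<close> have "(x - y) \<curlyvee> 0 + y \<in> A"
    by (rule subspace_add)
  then show "x \<curlyvee> y \<in> A" using mup_add[of "x - y" y 0] by simp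
  show "x \<curlywedge> y \<in> A"
    unfolding mlow_eq_diff_mup using A \<open>x \<in> A\<close> mup_zero_mem_solid(2)[OF d]
    by (rule subspace_diff)
next
  show "subspace A" by (rule A)
next
  show "z \<in> A" if "x \<in> A" "y \<in> A" "le x z \<and> le z y" for x y z
    using order_convex_solid that by blast
qed

end

end

theorem theorem5p18:
  fixes le sle :: "'a::real_vector \<Rightarrow> 'a \<Rightarrow> bool" and A :: "'a set"
  assumes "mixed_lattice_vs le sle" and "quasi_regular le sle" and "subspace A"
  shows "ml_ideal le sle A \<longleftrightarrow>
           (\<forall>x y. y \<in> A \<longrightarrow> le (sabs le sle x) (sabs le sle y) \<longrightarrow> x \<in> A)"
proof -
  interpret quasi_regular_mixed_lattice_space le sle
    using assms(1,2) by unfold_locales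
  show ?thesis
    using ideal_sabs_solid ml_ideal_if_sabs_solid[OF assms(3)] by blast
qed

end
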